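(* Let $\theta\in\mathbb{R}\setminus\mathbb{Q}$ with best rational approximants $(p_n/q_n)_{n\ge0}$, and let $q'$ be a subsequence of $(q_n)_{n\ge0}$. Then there exist $\mu\in\mathbb{R}$ and a dense $G_\delta$-subset $E_1$ of $l^\infty$ such that for every $u\in E_1$, the radius of convergence of the power series $\varphi_{\mu,q',u}$ equals $1$, and also the radius of convergence of $\varphi_{\mu,q'}$ (the series $\varphi_{\mu,q',u}$ for the constant sequence $u_m\equiv1$) equals $1$.
   Context: Best rational approximants $p_n/q_n$ of an irrational $\theta$ are its continued fraction convergents, with $\gcd(p_n,q_n)=1$, $q_n\ge0$. A subsequence $q'$ of $(q_n)$ means $q'_n=q_{k_n}$ with $k_n$ strictly increasing. $l^\infty$ is the complex Banach space of bounded complex sequences $u=(u_m)_{m\ge0}$ with the sup norm. For $\mu\in\mathbb{R}$ and $u\in l^\infty$, $\varphi_{\mu,q',u}(z)=z e^{2\pi i\mu}\sum_{n=0}^\infty u_{q'_n}(1-e^{2\pi i q'_n\mu})z^{q'_n}$, where $u_{q'_n}$ is the $q'_n$-th term of $u$. *)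

theory Defs
  imports "HOL-Analysis.Analysis"
begin

fun cf_rem :: "real \<Rightarrow> nat \<Rightarrow> real" where
  "cf_rem \<theta> 0 = \<theta>"
| "cf_rem \<theta> (Suc n) = 1 / frac (cf_rem \<theta> n)"

definition cf_a :: "real \<Rightarrow> nat \<Rightarrow> int" where
  "cf_a \<theta> n = \<lfloor>cf_rem \<theta> n\<rfloor>"

text \<open>Denominators of the convergents: q_0 = 1, q_1 = a_1, q_(n+2) = a_(n+2) q_(n+1) + q_n
  (for irrational theta, a_n >= 1 for n >= 1).\<close>

fun cf_q :: "real \<Rightarrow> nat \<Rightarrow> nat" where
  "cf_q \<theta> 0 = 1"
| "cf_q \<theta> (Suc 0) = nat (cf_a \<theta> 1)"
| "cf_q \<theta> (Suc (Suc n)) = nat (cf_a \<theta> (Suc (Suc n))) * cf_q \<theta> (Suc n) + cf_q \<theta> n"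

text \<open>Coefficient of z^m in
  phi_(mu,q',u)(z) = z e^(2 pi i mu) * sum_n u_(q'_n) (1 - e^(2 pi i q'_n mu)) z^(q'_n).\<close>

definition phi_coeff :: "real \<Rightarrow> (nat \<Rightarrow> nat) \<Rightarrow> (nat \<Rightarrow> complex) \<Rightarrow> nat \<Rightarrow> complex" where
  "phi_coeff \<mu> q' u m =
     exp (2 * pi * \<i> * complex_of_real \<mu>) *
     (\<Sum>n\<in>{n. q' n + 1 = m}. u (q' n) * (1 - exp (2 * pi * \<i> * of_nat (q' n) * complex_of_real \<mu>)))"

end

theory Submission
  imports Defs
begin

text \<open>Take \<open>\<mu> = \<surd>2\<close>. Since \<open>\<surd>2\<close> is badly approximable,
  \<open>|1 - exp (2\<pi>i q\<surd>2)| \<ge> 1/(2q)\<close>. Hence if \<open>|u (q' n)| \<ge> \<epsilon>\<close> for all \<open>n\<close>, the coefficient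
  of \<open>z ^ (q' n + 1)\<close> has modulus at least \<open>\<epsilon> / (2 q' n)\<close>, which only decays polynomially
  along \<open>q' n \<rightarrow> \<infinity>\<close>, so the series diverges at every \<open>r > 1\<close>. On the other hand \<open>q' n \<ge> n\<close>,
  so the coefficients grow at most linearly and the radius is at least \<open>1\<close>. The sequences
  bounded away from \<open>0\<close> on the range of \<open>q'\<close> form an open dense subset of \<open>l\<^sup>\<infinity>\<close>, and the
  constant sequence \<open>1\<close> is one of them.\<close>

lemma norm_1_minus_exp_i:
  "norm (1 - exp (\<i> * complex_of_real y)) = 2 * \<bar>sin (y / 2)\<bar>"
proof -
  have e: "exp (\<i> * complex_of_real y) = Complex (cos y) (sin y)"
    by (simp add: exp_Euler cos_of_real sin_of_real Complex_eq)
  have "norm (1 - exp (\<i> * complex_of_real y)) = sqrt ((1 - cos y)\<^sup>2 + (sin y)\<^sup>2)"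
    by (simp add: e cmod_def)
  also have "(1 - cos y)\<^sup>2 + (sin y)\<^sup>2 = 2 - 2 * cos y"
    using sin_cos_squared_add[of y] by (simp add: power2_eq_square algebra_simps)
  also have "\<dots> = (2 * sin (y / 2))\<^sup>2"
    using cos_double_sin[of "y / 2"] by (simp add: power2_eq_square)
  finally show ?thesis
    by (simp only: real_sqrt_abs)
qed

lemma sin_ge_third:
  assumes "0 \<le> t" "t \<le> pi / 2"
  shows "t / 3 \<le> sin t"
proof -
  have "\<bar>sin t - (\<Sum>m<3. sin_coeff m * t ^ m)\<bar> \<le> inverse (fact 3) * \<bar>t\<bar> ^ 3"
    by (rule Maclaurin_sin_bound)
  then have "\<bar>sin t - t\<bar> \<le> t ^ 3 / 6"
    using assms by (simp add: sin_coeff_def numeral_3_eq_3 lessThan_Suc fact_numeral eval_nat_numeral)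
  moreover have "t\<^sup>2 \<le> 2\<^sup>2"
    using assms pi_less_4 by (intro power_mono) auto
  then have "t ^ 3 \<le> 4 * t"
    using assms by (simp add: power2_eq_square power3_eq_cube mult_right_mono)
  ultimately show ?thesis
    by linarith
qed

lemma norm_1_minus_exp_ge_dist_round:
  "2 * \<bar>x - of_int (round x)\<bar> \<le> norm (1 - exp (2 * pi * \<i> * complex_of_real x))"
proof -
  define d where "d = x - of_int (round x)"
  have d: "\<bar>d\<bar> \<le> 1 / 2"
    using of_int_round_abs_le[of x] by (simp add: d_def abs_minus_commute)
  have "0 \<le> sin (pi * \<bar>d\<bar>)"
    using d by (intro sin_ge_zero) (auto simp: mult_left_le)
  then have sin_abs: "\<bar>sin (pi * d)\<bar> = sin (pi * \<bar>d\<bar>)"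
    by (cases "0 \<le> d") (auto simp: abs_if)
  have "\<bar>d\<bar> \<le> pi * \<bar>d\<bar> / 3"
    using pi_gt3 mult_right_mono[of 3 pi "\<bar>d\<bar>"] by (simp add: mult.commute)
  also have "\<dots> \<le> sin (pi * \<bar>d\<bar>)"
    using d by (intro sin_ge_third) (auto simp: mult_left_le)
  finally have "2 * \<bar>d\<bar> \<le> 2 * \<bar>sin (pi * d)\<bar>"
    by (simp add: sin_abs)
  moreover have "2 * pi * \<i> * complex_of_real x
      = \<i> * complex_of_real (2 * pi * d) + \<i> * (of_int (round x) * (of_real pi * 2))"
    by (simp add: d_def algebra_simps)
  then have "norm (1 - exp (2 * pi * \<i> * complex_of_real x)) = 2 * \<bar>sin (pi * d)\<bar>"
    by (simp only: exp_plus_2pin norm_1_minus_exp_i) simp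
  ultimately show ?thesis
    by (simp add: d_def)
qed

lemma nat_square_neq_double_square:
  fixes p q :: nat
  assumes "0 < q"
  shows "p\<^sup>2 \<noteq> 2 * q\<^sup>2"
  using assms
proof (induction p arbitrary: q rule: less_induct)
  case (less p)
  show ?case
  proof
    assume eq: "p\<^sup>2 = 2 * q\<^sup>2"
    then have "even p"
      by (metis dvd_triv_left even_power)
    then obtain a where a: "p = 2 * a" ..
    with eq have "q\<^sup>2 = 2 * a\<^sup>2"
      by (simp add: power_mult_distrib)
    then have "even q"
      by (metis dvd_triv_left even_power)
    then obtain b where b: "q = 2 * b" ..
    with \<open>q\<^sup>2 = 2 * a\<^sup>2\<close> have "a\<^sup>2 = 2 * b\<^sup>2"
      by (simp add: power_mult_distrib)
    moreover have "0 < b"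
      using b less.prems by simp
    moreover have "a < p"
      using a eq less.prems by (cases "a = 0") auto
    ultimately show False
      using less.IH by blast
  qed
qed

lemma int_square_neq_double_square:
  fixes p q :: int
  assumes "q \<noteq> 0"
  shows "p\<^sup>2 \<noteq> 2 * q\<^sup>2"
proof
  assume "p\<^sup>2 = 2 * q\<^sup>2"
  then have "int ((nat \<bar>p\<bar>)\<^sup>2) = int (2 * (nat \<bar>q\<bar>)\<^sup>2)"
    by simp
  then have "(nat \<bar>p\<bar>)\<^sup>2 = 2 * (nat \<bar>q\<bar>)\<^sup>2"
    by (simp only: of_nat_eq_iff)
  with assms nat_square_neq_double_square[of "nat \<bar>q\<bar>"] show False
    by simp
qed

text \<open>Liouville's argument for the quadratic irrational \<open>\<surd>2\<close>: \<open>|2q\<^sup>2 - p\<^sup>2| \<ge> 1\<close> and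
  \<open>2q\<^sup>2 - p\<^sup>2 = (q\<surd>2 - p)(q\<surd>2 + p)\<close>.\<close>

lemma sqrt2_dist_int_ge:
  fixes q :: nat and p :: int
  assumes "1 \<le> q"
  shows "1 / (4 * real q) \<le> \<bar>real q * sqrt 2 - of_int p\<bar>"
proof (cases "\<bar>real q * sqrt 2 - of_int p\<bar> \<le> 1 / 2")
  case False
  have "1 / (4 * real q) \<le> 1 / 2"
    using assms by (simp add: divide_simps)
  with False show ?thesis
    by linarith
next
  case True
  define d where "d = real q * sqrt 2 - of_int p"
  have "p\<^sup>2 \<noteq> 2 * (int q)\<^sup>2"
    using assms int_square_neq_double_square[of "int q" p] by simp
  then have "1 \<le> \<bar>real_of_int (2 * (int q)\<^sup>2 - p\<^sup>2)\<bar>"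
    by linarith
  also have "real_of_int (2 * (int q)\<^sup>2 - p\<^sup>2) = d * (real q * sqrt 2 + of_int p)"
    by (simp add: d_def power2_eq_square algebra_simps)
  also have "\<bar>d * (real q * sqrt 2 + of_int p)\<bar> \<le> \<bar>d\<bar> * (4 * real q)"
  proof -
    have "sqrt 2 \<le> 3 / 2"
      by (rule real_le_lsqrt) (auto simp: power2_eq_square)
    then have "real q * sqrt 2 \<le> real q * (3 / 2)"
      by (intro mult_left_mono) auto
    moreover have "0 \<le> real q * sqrt 2"
      by simp
    ultimately have "\<bar>real q * sqrt 2 + of_int p\<bar> \<le> 4 * real q"
      using True assms by linarith
    then show ?thesis
      by (simp add: abs_mult mult_left_mono)
  qed
  finally show ?thesis
    using assms by (simp add: d_def field_simps)
qed

lemma norm_1_minus_exp_sqrt2_ge: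
  assumes "1 \<le> q"
  shows "1 / (2 * real q) \<le> norm (1 - exp (2 * pi * \<i> * of_nat q * complex_of_real (sqrt 2)))"
proof -
  let ?x = "real q * sqrt 2"
  have "1 / (2 * real q) = 2 * (1 / (4 * real q))"
    by simp
  also have "\<dots> \<le> 2 * \<bar>?x - of_int (round ?x)\<bar>"
    using sqrt2_dist_int_ge[OF assms, of "round ?x"] by simp
  also have "\<dots> \<le> norm (1 - exp (2 * pi * \<i> * complex_of_real ?x))"
    by (rule norm_1_minus_exp_ge_dist_round)
  finally show ?thesis
    by (simp add: mult.assoc)
qed

lemma conv_radius_ge_1_if_linear_bound:
  fixes c :: "nat \<Rightarrow> 'a :: {banach, real_normed_div_algebra}"
  assumes "\<And>m. norm (c m) \<le> C * real (Suc m)"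
  shows "1 \<le> conv_radius c"
proof (rule conv_radius_geI_ex')
  fix r :: real
  assume r: "0 < r" "ereal r < 1"
  have "summable (\<lambda>n. diffs (\<lambda>_. 1 :: real) n * r ^ n)"
    by (rule termdiff_converges[of _ 1]) (use r in \<open>auto intro: summable_geometric\<close>)
  then have "summable (\<lambda>n. C * (real (Suc n) * r ^ n))"
    by (intro summable_mult) (simp add: diffs_def)
  moreover have "norm (c n * of_real r ^ n) \<le> C * (real (Suc n) * r ^ n)" for n
    using mult_right_mono[OF assms[of n], of "r ^ n"] r by (simp add: norm_mult norm_power)
  ultimately show "summable (\<lambda>n. c n * of_real r ^ n)"
    by (rule summable_comparison_test')
qed

lemma conv_radius_le_1_if_inverse_lower_bound:
  fixes c :: "nat \<Rightarrow> 'a :: {banach, real_normed_div_algebra}"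
  assumes Q: "filterlim Q at_top sequentially" and "0 < \<delta>"
    and lower: "\<forall>\<^sub>F n in sequentially. \<delta> / real (Q n) \<le> norm (c (Q n))"
  shows "conv_radius c \<le> 1"
proof (rule conv_radius_leI_ex')
  fix r :: real
  assume "0 < r" "1 < ereal r"
  then have "1 < r"
    by simp
  have bound: "\<forall>\<^sub>F n in sequentially. \<delta> * (r - 1) \<le> norm (c (Q n) * of_real r ^ Q n)"
    using lower filterlim_at_top[THEN iffD1, OF Q, rule_format, of 1]
  proof eventually_elim
    case (elim n)
    have "1 + real (Q n) * (r - 1) \<le> (1 + (r - 1)) ^ Q n"
      using \<open>1 < r\<close> by (intro Bernoulli_inequality) auto
    then have "\<delta> / real (Q n) * (real (Q n) * (r - 1)) \<le> norm (c (Q n)) * r ^ Q n"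
      using elim \<open>0 < \<delta>\<close> \<open>1 < r\<close> by (intro mult_mono) auto
    then show ?case
      using elim \<open>0 < r\<close> by (simp add: norm_mult norm_power)
  qed
  have pos: "\<delta> * (r - 1) > 0"
    using \<open>0 < \<delta>\<close> \<open>1 < r\<close> by simp
  show "\<not> summable (\<lambda>n. c n * of_real r ^ n)"
  proof
    assume "summable (\<lambda>n. c n * of_real r ^ n)"
    then have "(\<lambda>n. c (Q n) * of_real r ^ Q n) \<longlonglongrightarrow> 0"
      using filterlim_compose[OF summable_LIMSEQ_zero Q] by blast
    then have "\<forall>\<^sub>F n in sequentially. norm (c (Q n) * of_real r ^ Q n) < \<delta> * (r - 1)"
      using pos by (rule order_tendstoD(2)[OF tendsto_norm_zero, unfolded norm_zero])
    with bound have "\<forall>\<^sub>F n in sequentially. False"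
      by eventually_elim auto
    then show False
      by simp
  qed
qed simp

lemma norm_phi_coeff:
  "norm (phi_coeff \<mu> Q f m) = real (card {n. Q n + 1 = m}) * norm (f (m - 1)) *
     norm (1 - exp (2 * pi * \<i> * of_nat (m - 1) * complex_of_real \<mu>))"
proof -
  let ?e = "\<lambda>q::nat. exp (2 * pi * \<i> * of_nat q * complex_of_real \<mu>)"
  have "(\<Sum>n\<in>{n. Q n + 1 = m}. f (Q n) * (1 - ?e (Q n)))
      = (\<Sum>n\<in>{n. Q n + 1 = m}. f (m - 1) * (1 - ?e (m - 1)))"
    by (rule sum.cong) auto
  then have "phi_coeff \<mu> Q f m
      = exp (2 * pi * \<i> * complex_of_real \<mu>) * (of_nat (card {n. Q n + 1 = m}) * (f (m - 1) * (1 - ?e (m - 1))))"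
    by (simp only: phi_coeff_def sum_constant)
  moreover have "norm (exp (2 * pi * \<i> * complex_of_real \<mu>)) = 1"
    by (simp add: norm_exp)
  ultimately show ?thesis
    by (simp only: norm_mult norm_of_nat mult_1 mult.assoc)
qed

lemma preimage_Suc_subset_atMost:
  fixes Q :: "nat \<Rightarrow> nat"
  assumes "\<And>n. n \<le> Q n"
  shows "{n. Q n + 1 = m} \<subseteq> {..m}"
proof
  fix n
  assume "n \<in> {n. Q n + 1 = m}"
  with assms[of n] show "n \<in> {..m}"
    by auto
qed

lemma norm_phi_coeff_le:
  fixes Q :: "nat \<Rightarrow> nat"
  assumes Q: "\<And>n. n \<le> Q n" and B: "\<And>m. norm (f m) \<le> B"
  shows "norm (phi_coeff \<mu> Q f m) \<le> 2 * B * real (Suc m)"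
proof -
  have "card {n. Q n + 1 = m} \<le> Suc m"
    using card_mono[OF _ preimage_Suc_subset_atMost[OF Q]] by fastforce
  moreover have "norm (1 - exp (2 * pi * \<i> * of_nat (m - 1) * complex_of_real \<mu>)) \<le> 2"
    using norm_triangle_ineq4[of 1 "exp (2 * pi * \<i> * of_nat (m - 1) * complex_of_real \<mu>)"]
    by (simp add: norm_exp)
  ultimately have "norm (phi_coeff \<mu> Q f m) \<le> real (Suc m) * B * 2"
    unfolding norm_phi_coeff using B[of "m - 1"] order_trans[OF norm_ge_zero B]
    by (intro mult_mono) auto
  then show ?thesis
    by (simp only: mult_ac)
qed

lemma norm_phi_coeff_Suc_ge:
  fixes Q :: "nat \<Rightarrow> nat"
  assumes Q: "\<And>n. n \<le> Q n"
  shows "norm (f (Q n)) * norm (1 - exp (2 * pi * \<i> * of_nat (Q n) * complex_of_real \<mu>))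
    \<le> norm (phi_coeff \<mu> Q f (Q n + 1))"
    (is "?X \<le> _")
proof -
  have "finite {k. Q k + 1 = Q n + 1}"
    using preimage_Suc_subset_atMost[OF Q] finite_subset by blast
  then have "1 \<le> card {k. Q k + 1 = Q n + 1}"
    by (auto simp: Suc_le_eq card_gt_0_iff)
  then have "?X \<le> real (card {k. Q k + 1 = Q n + 1}) * ?X"
    using mult_right_mono[OF of_nat_mono, of 1 _ ?X] by simp
  also have "\<dots> = norm (phi_coeff \<mu> Q f (Q n + 1))"
    by (simp only: norm_phi_coeff diff_add_inverse2 mult.assoc)
  finally show ?thesis .
qed

lemma conv_radius_phi_coeff_eq_1:
  fixes Q :: "nat \<Rightarrow> nat" and f :: "nat \<Rightarrow> complex"
  assumes Q: "\<And>n. n \<le> Q n"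
    and \<mu>: "0 < \<eta>" "\<And>q. 1 \<le> q \<Longrightarrow> \<eta> / real q \<le> norm (1 - exp (2 * pi * \<i> * of_nat q * complex_of_real \<mu>))"
    and f: "bounded (range f)" "0 < \<epsilon>" "\<And>n. \<epsilon> \<le> norm (f (Q n))"
  shows "conv_radius (phi_coeff \<mu> Q f) = 1"
proof (rule antisym)
  obtain B where B: "\<And>m. norm (f m) \<le> B"
    using f(1) unfolding bounded_iff by blast
  show "1 \<le> conv_radius (phi_coeff \<mu> Q f)"
    by (rule conv_radius_ge_1_if_linear_bound[OF norm_phi_coeff_le[OF Q B]])
next
  have "n \<le> Q n + 1" for n
    using Q[of n] by linarith
  then have "filterlim (\<lambda>n. Q n + 1) at_top sequentially"
    by (intro filterlim_at_top_mono[OF filterlim_ident] always_eventually) simp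
  moreover have "\<forall>\<^sub>F n in sequentially.
      \<epsilon> * \<eta> / real (Q n + 1) \<le> norm (phi_coeff \<mu> Q f (Q n + 1))"
    using eventually_ge_at_top[of 1]
  proof eventually_elim
    case (elim n)
    then have "1 \<le> Q n"
      using Q order_trans by blast
    have "\<epsilon> * \<eta> / real (Q n + 1) \<le> \<epsilon> * (\<eta> / real (Q n))"
      using \<open>1 \<le> Q n\<close> \<open>0 < \<epsilon>\<close> \<open>0 < \<eta>\<close> by (simp add: frac_le)
    also have "\<dots> \<le> norm (f (Q n)) * norm (1 - exp (2 * pi * \<i> * of_nat (Q n) * complex_of_real \<mu>))"
      using f(3)[of n] \<mu>(2)[OF \<open>1 \<le> Q n\<close>] \<open>0 < \<epsilon>\<close> \<open>0 < \<eta>\<close> by (intro mult_mono) auto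
    also have "\<dots> \<le> norm (phi_coeff \<mu> Q f (Q n + 1))"
      by (rule norm_phi_coeff_Suc_ge[OF Q])
    finally show ?case .
  qed
  ultimately show "conv_radius (phi_coeff \<mu> Q f) \<le> 1"
    using \<open>0 < \<epsilon>\<close> \<open>0 < \<eta>\<close>
    by (intro conv_radius_le_1_if_inverse_lower_bound[of "\<lambda>n. Q n + 1" "\<epsilon> * \<eta>"]) auto
qed

definition bounded_away_on :: "nat set \<Rightarrow> (nat \<Rightarrow>\<^sub>C 'a::real_normed_vector) set" where
  "bounded_away_on S = {u. \<exists>\<epsilon>>0. \<forall>m\<in>S. \<epsilon> \<le> norm (apply_bcontfun u m)}"

lemma open_bounded_away_on: "open (bounded_away_on S)"
  unfolding open_dist
proof
  fix u
  assume "u \<in> bounded_away_on S"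
  then obtain \<epsilon> where "\<epsilon> > 0" and \<epsilon>: "\<And>m. m \<in> S \<Longrightarrow> \<epsilon> \<le> norm (apply_bcontfun u m)"
    by (auto simp: bounded_away_on_def)
  have "v \<in> bounded_away_on S" if "dist v u < \<epsilon> / 2" for v
  proof -
    have "\<epsilon> / 2 \<le> norm (apply_bcontfun v m)" if "m \<in> S" for m
      using dist_fun_lt_imp_dist_val_lt[OF \<open>dist v u < \<epsilon> / 2\<close>, of m] \<epsilon>[OF that]
        norm_triangle_ineq2[of "apply_bcontfun u m" "apply_bcontfun v m"]
      by (simp add: dist_norm norm_minus_commute)
    then show ?thesis
      using \<open>\<epsilon> > 0\<close> unfolding bounded_away_on_def by (intro CollectI exI[of _ "\<epsilon> / 2"]) auto
  qed
  then show "\<exists>e>0. \<forall>v. dist v u < e \<longrightarrow> v \<in> bounded_away_on S"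
    using \<open>\<epsilon> > 0\<close> by (intro exI[of _ "\<epsilon> / 2"]) auto
qed

text \<open>Entries of modulus below \<open>e/4\<close> are replaced by \<open>e/2\<close>; this moves \<open>u\<close> by less than \<open>e\<close>.\<close>

lemma dense_bounded_away_on:
  "closure (bounded_away_on S :: (nat \<Rightarrow>\<^sub>C 'a::real_normed_algebra_1) set) = UNIV"
proof -
  have "\<exists>v\<in>bounded_away_on S. dist v u < e" if "0 < e" for u :: "nat \<Rightarrow>\<^sub>C 'a" and e
  proof -
    define g where "g m = (if norm (apply_bcontfun u m) < e / 4 then of_real (e / 2) else apply_bcontfun u m)" for m
    obtain B where B: "\<And>m. norm (apply_bcontfun u m) \<le> B"
      using bounded_apply_bcontfun[of u] unfolding bounded_iff by blast
    have "bounded (range g)"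
      unfolding bounded_iff using B \<open>0 < e\<close>
      by (intro exI[of _ "max (e / 2) B"]) (auto simp: g_def le_max_iff_disj)
    then have g: "apply_bcontfun (Bcontfun g) = g"
      by (simp add: bcontfun_def Bcontfun_inverse)
    have "Bcontfun g \<in> bounded_away_on S"
      unfolding bounded_away_on_def using \<open>0 < e\<close>
      by (intro CollectI exI[of _ "e / 4"]) (auto simp: g g_def)
    moreover have "dist (Bcontfun g) u \<le> 3 * e / 4"
    proof (rule dist_bound)
      fix m
      show "dist (apply_bcontfun (Bcontfun g) m) (apply_bcontfun u m) \<le> 3 * e / 4"
      proof (cases "norm (apply_bcontfun u m) < e / 4")
        case True
        then have "dist (apply_bcontfun (Bcontfun g) m) (apply_bcontfun u m)
            \<le> norm (of_real (e / 2) :: 'a) + norm (apply_bcontfun u m)"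
          using norm_triangle_ineq4[of "of_real (e / 2) :: 'a" "apply_bcontfun u m"]
          by (simp add: g g_def dist_norm)
        with True \<open>0 < e\<close> show ?thesis
          by simp
      qed (use \<open>0 < e\<close> in \<open>simp add: g g_def\<close>)
    qed
    ultimately show ?thesis
      using \<open>0 < e\<close> by (intro bexI[of _ "Bcontfun g"]) auto
  qed
  then show ?thesis
    by (auto simp: closure_approachable)
qed

lemma cf_rem_not_rat:
  assumes "\<theta> \<notin> \<rat>"
  shows "cf_rem \<theta> n \<notin> \<rat>"
proof (induction n)
  case 0
  then show ?case
    using assms by simp
next
  case (Suc n)
  show ?case
  proof
    assume "cf_rem \<theta> (Suc n) \<in> \<rat>"
    then have "frac (cf_rem \<theta> n) \<in> \<rat>"
      using Rats_divide[OF Rats_1] by fastforce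
    then have "of_int \<lfloor>cf_rem \<theta> n\<rfloor> + frac (cf_rem \<theta> n) \<in> \<rat>"
      by (intro Rats_add) auto
    with Suc show False
      by (simp add: frac_def)
  qed
qed

lemma cf_a_pos:
  assumes "\<theta> \<notin> \<rat>"
  shows "1 \<le> cf_a \<theta> (Suc n)"
proof -
  have "cf_rem \<theta> n \<notin> \<int>"
    using cf_rem_not_rat[OF assms] Ints_subset_Rats by blast
  then have "0 < frac (cf_rem \<theta> n)"
    using frac_ge_0[of "cf_rem \<theta> n"] by (simp add: frac_eq_0_iff order_le_less)
  then have "1 < 1 / frac (cf_rem \<theta> n)"
    using frac_lt_1[of "cf_rem \<theta> n"] by (simp add: field_simps)
  then show ?thesis
    by (simp add: cf_a_def le_floor_iff)
qed

lemma cf_q_ge_index: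
  assumes "\<theta> \<notin> \<rat>"
  shows "n \<le> cf_q \<theta> n"
  using assms
proof (induction \<theta> n rule: cf_q.induct)
  case (2 \<theta>)
  then show ?case
    using cf_a_pos[of \<theta> 0] by (simp add: le_nat_iff)
next
  case (3 \<theta> n)
  have "1 \<le> nat (cf_a \<theta> (Suc (Suc n)))"
    using cf_a_pos[OF "3.prems", of "Suc n"] by simp
  then have "cf_q \<theta> (Suc n) \<le> nat (cf_a \<theta> (Suc (Suc n))) * cf_q \<theta> (Suc n)"
    by simp
  moreover have "Suc n \<le> cf_q \<theta> (Suc n)"
    using 3 by simp
  moreover have "1 \<le> cf_q \<theta> n"
    using 3 by (cases n) auto
  ultimately show ?case
    unfolding cf_q.simps by linarith
qed simp

theorem lemma2p3:
  fixes \<theta> :: real and k :: "nat \<Rightarrow> nat"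
  assumes "\<theta> \<notin> \<rat>"
    and "strict_mono k"
  shows "\<exists>(\<mu>::real) (E1 :: (nat \<Rightarrow>\<^sub>C complex) set).
           gdelta E1 \<and> closure E1 = UNIV \<and>
           (\<forall>u\<in>E1. conv_radius (phi_coeff \<mu> (cf_q \<theta> \<circ> k) (apply_bcontfun u)) = 1) \<and>
           conv_radius (phi_coeff \<mu> (cf_q \<theta> \<circ> k) (\<lambda>_. 1)) = 1"
proof -
  define Q where "Q = cf_q \<theta> \<circ> k"
  have Q: "n \<le> Q n" for n
    using seq_suble[OF assms(2), of n] cf_q_ge_index[OF assms(1), of "k n"] by (simp add: Q_def)
  have conv_radius_eq_1: "conv_radius (phi_coeff (sqrt 2) Q f) = 1"
    if "bounded (range f)" "0 < \<epsilon>" "\<And>n. \<epsilon> \<le> norm (f (Q n))" for f \<epsilon>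
    using Q norm_1_minus_exp_sqrt2_ge that
    by (intro conv_radius_phi_coeff_eq_1[where \<eta> = "1 / 2"]) auto
  have "gdelta (bounded_away_on (range Q) :: (nat \<Rightarrow>\<^sub>C complex) set)"
    using gdelta.intros[of "\<lambda>_. bounded_away_on (range Q)"] by (simp add: open_bounded_away_on)
  moreover have "conv_radius (phi_coeff (sqrt 2) Q (apply_bcontfun u)) = 1"
    if "u \<in> bounded_away_on (range Q)" for u
    using that bounded_apply_bcontfun[of u]
    by (auto simp: bounded_away_on_def intro: conv_radius_eq_1)
  moreover have "conv_radius (phi_coeff (sqrt 2) Q (\<lambda>_. 1)) = 1"
    by (rule conv_radius_eq_1[of _ 1]) auto
  ultimately show ?thesis
    unfolding Q_def using dense_bounded_away_on by blast
qed

end
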